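(* Let $n_1,n_2,n_3\in\mathbb{N}$, let $\sigma$ be a segment label map on $G=\{1,\dots,n_1\}\times\{1,\dots,n_2\}\times\{1,\dots,n_3\}$, fix any decomposition of $T$ into blocks, let $\tau=\mathrm{LABEL}(\sigma,T)$ and let $\tau'$ be the output of the block-wise method. Then $\tau$ and $\tau'$ are isomorphic with respect to the set of all 3-cells of $T$.
   Context: Voxel grid and segmentation: $G=\{1,\dots,n_1\}\times\{1,\dots,n_2\}\times\{1,\dots,n_3\}$; voxels $v,w$ are adjacent iff $\sum_i|v_i-w_i|=1$. A segment label map is $\sigma:G\to\mathbb{N}=\{1,2,\dots\}$ such that each level set $\sigma^{-1}(l)$ is connected w.r.t. this adjacency. Topological grid: $T=\{1,\dots,2n_1-1\}\times\{1,\dots,2n_2-1\}\times\{1,\dots,2n_3-1\}$; a cell with exactly $j$ odd coordinates is a $j$-cell. Voxel $r$ corresponds to the 3-cell $2r-1$. Two cells are 6-neighbors if they differ by $1$ in exactly one coordinate. For a $j$-cell $t$, $\Gamma(t)$ is the set of 6-neighbors of $t$ in $T$ that are $(j+1)$-cells. Cells $t_1,t_2$ are connected, $t_1\leftrightarrow t_2$, iff there is $t\in T$ with $t_1,t_2\in\Gamma(t)$. Procedure LABEL: for a voxel box $\prod_i\{a_i,\dots,b_i\}\subseteq G$ let $B=\prod_i\{2a_i-1,\dots,2b_i-1\}$ be its cell box. $\mathrm{LABEL}(\sigma,B)$ produces $\lambda:B\to\mathbb{N}_0$: (1) $\lambda(2r-1)=\sigma(r)$ for 3-cells. (2) For $j=2,1,0$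 in this order: for each $j$-cell $t\in B$ let $\theta(t)$ be the set of positive integers occurring exactly once in $(\lambda(s))_{s\in\Gamma(t)}$; $t$ is active iff $\theta(t)\ne\emptyset$, inactive $j$-cells get label $0$; the active $j$-cells of $B$ are partitioned into maximal sets of cells with equal $\theta$ that are connected by $\leftrightarrow$-paths inside the set; these classes are numbered $1,\dots,m_j(B)$ arbitrarily and each active $j$-cell gets its class number. Reference labeling: $\tau=\mathrm{LABEL}(\sigma,T)$. Block-wise method: for each axis $i$ choose odd integers $1=a^i_0<\dots<a^i_{m_i}=2n_i-1$; blocks are the boxes $\prod_i\{a^i_{k_i-1},\dots,a^i_{k_i}\}$. Step 1: $\lambda_B=\mathrm{LABEL}(\sigma,B)$ for each block. Step 2: with blocks ordered $B_1,\dots,B_K$, add offset $\sum_{k'<k}m_j(B_{k'})$ to each positive $j$-cell label of $\lambda_{B_k}$ ($j\in\{0,1,2\}$). Step 3: for $j\in\{1,2\}$, via union–find, unite the labels received in different blocks by any active $j$-cell lying in several blocks, and replace every positive $j$-cell label by its set representative. Step 4: for each 0-cell $t_0$ and each pair of distinct 1-cell labels occurring exactly once among the current labels of $\Gamma(t_0)$, merge the two labels if the corresponding 1-cells bound the same set of current 2-cell labels; if any merge took place at $t_0$, recompute the activity of $t_0$ and set its label to $0$ if inactive. The result is $\tau':T\to\mathbb{N}_0$. Isomorphism w.r.t. $U\subseteq T$: for all $u\in U$, $\tau(u)=0\Leftrightarrow\tau'(u)=0$, and for all $u,v\in U$, $\tau(u)=\tau(v)\Leftrightarrow\tau'(u)=\tau'(v)$.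 *)

theory Defs
  imports Main
begin

type_synonym cell = "nat \<times> nat \<times> nat"

definition coord :: "cell \<Rightarrow> nat \<Rightarrow> nat" where
  "coord t i = (if i = 0 then fst t else if i = 1 then fst (snd t) else snd (snd t))"

text \<open>l1-distance; voxel adjacency and 6-neighbourhood are both dist1 = 1.\<close>
definition dist1 :: "cell \<Rightarrow> cell \<Rightarrow> int" where
  "dist1 v w = (\<Sum>i<3. \<bar>int (coord v i) - int (coord w i)\<bar>)"

definition Ggrid :: "cell \<Rightarrow> cell set" where
  "Ggrid n = {v. \<forall>i<3. 1 \<le> coord v i \<and> coord v i \<le> coord n i}"

definition Tgrid :: "cell \<Rightarrow> cell set" where
  "Tgrid n = {t. \<forall>i<3. 1 \<le> coord t i \<and> coord t i \<le> 2 * coord n i - 1}"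

definition cdim :: "cell \<Rightarrow> nat" where
  "cdim t = card {i. i < 3 \<and> odd (coord t i)}"

text \<open>Voxel corresponding to a 3-cell (inverse of r to 2r-1).\<close>
definition vox :: "cell \<Rightarrow> cell" where
  "vox t = ((fst t + 1) div 2, (fst (snd t) + 1) div 2, (snd (snd t) + 1) div 2)"

definition segment_map :: "cell \<Rightarrow> (cell \<Rightarrow> nat) \<Rightarrow> bool" where
  "segment_map n \<sigma> \<longleftrightarrow>
     (\<forall>v\<in>Ggrid n. 1 \<le> \<sigma> v) \<and>
     (\<forall>v\<in>Ggrid n. \<forall>w\<in>Ggrid n. \<sigma> v = \<sigma> w \<longrightarrow>
        (\<lambda>x y. x \<in> Ggrid n \<and> y \<in> Ggrid n \<and> \<sigma> x = \<sigma> v \<and> \<sigma> y = \<sigma> v \<and> dist1 x y = 1)\<^sup>*\<^sup>* v w)"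

definition Gam :: "cell \<Rightarrow> cell \<Rightarrow> cell set" where
  "Gam n t = {s \<in> Tgrid n. dist1 s t = 1 \<and> cdim s = cdim t + 1}"

definition conn :: "cell \<Rightarrow> cell \<Rightarrow> cell \<Rightarrow> bool" where
  "conn n t1 t2 \<longleftrightarrow> (\<exists>t\<in>Tgrid n. t1 \<in> Gam n t \<and> t2 \<in> Gam n t)"

definition theta :: "cell \<Rightarrow> (cell \<Rightarrow> nat) \<Rightarrow> cell \<Rightarrow> nat set" where
  "theta n lam t = {l. 0 < l \<and> card {s \<in> Gam n t. lam s = l} = 1}"

definition active :: "cell \<Rightarrow> (cell \<Rightarrow> nat) \<Rightarrow> cell set \<Rightarrow> nat \<Rightarrow> cell set" where
  "active n lam B j = {t \<in> B. cdim t = j \<and> theta n lam t \<noteq> {}}"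

definition sameclass :: "cell \<Rightarrow> (cell \<Rightarrow> nat) \<Rightarrow> cell set \<Rightarrow> cell \<Rightarrow> cell \<Rightarrow> bool" where
  "sameclass n lam B t1 t2 \<longleftrightarrow>
     theta n lam t1 = theta n lam t2 \<and>
     (\<lambda>a b. a \<in> B \<and> b \<in> B \<and> cdim a = cdim t1 \<and> cdim b = cdim t1 \<and>
            theta n lam a = theta n lam t1 \<and> theta n lam b = theta n lam t1 \<and> conn n a b)\<^sup>*\<^sup>* t1 t2"

text \<open>m_j(B): number of classes of active j-cells.\<close>
definition mcount :: "cell \<Rightarrow> (cell \<Rightarrow> nat) \<Rightarrow> cell set \<Rightarrow> nat \<Rightarrow> nat" where
  "mcount n lam B j = card (lam ` active n lam B j)"

text \<open>lam is a possible output of LABEL(sigma, B) (the class numbering is arbitrary).\<close>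
definition is_LABEL :: "cell \<Rightarrow> (cell \<Rightarrow> nat) \<Rightarrow> cell set \<Rightarrow> (cell \<Rightarrow> nat) \<Rightarrow> bool" where
  "is_LABEL n \<sigma> B lam \<longleftrightarrow>
     (\<forall>t\<in>B. cdim t = 3 \<longrightarrow> lam t = \<sigma> (vox t)) \<and>
     (\<forall>t\<in>B. cdim t < 3 \<longrightarrow> theta n lam t = {} \<longrightarrow> lam t = 0) \<and>
     (\<forall>j<3. lam ` active n lam B j = {1..mcount n lam B j}) \<and>
     (\<forall>t1\<in>B. \<forall>t2\<in>B. cdim t1 < 3 \<and> cdim t1 = cdim t2 \<and>
        theta n lam t1 \<noteq> {} \<and> theta n lam t2 \<noteq> {} \<longrightarrow>
        (lam t1 = lam t2 \<longleftrightarrow> sameclass n lam B t1 t2))"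

definition cbox :: "cell \<Rightarrow> cell \<Rightarrow> cell set" where
  "cbox lo hi = {t. \<forall>i<3. coord lo i \<le> coord t i \<and> coord t i \<le> coord hi i}"

definition axis_part :: "cell \<Rightarrow> (nat \<Rightarrow> nat \<Rightarrow> nat) \<Rightarrow> (nat \<Rightarrow> nat) \<Rightarrow> nat \<Rightarrow> bool" where
  "axis_part n a m i \<longleftrightarrow> 0 < m i \<and> a i 0 = 1 \<and> a i (m i) = 2 * coord n i - 1 \<and>
     (\<forall>k\<le>m i. odd (a i k)) \<and> (\<forall>k<m i. a i k < a i (Suc k))"

definition blocks :: "(nat \<Rightarrow> nat \<Rightarrow> nat) \<Rightarrow> (nat \<Rightarrow> nat) \<Rightarrow> cell set set" where
  "blocks a m = {cbox (a 0 (k0 - 1), a 1 (k1 - 1), a 2 (k2 - 1)) (a 0 k0, a 1 k1, a 2 k2) | k0 k1 k2.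
      1 \<le> k0 \<and> k0 \<le> m 0 \<and> 1 \<le> k1 \<and> k1 \<le> m 1 \<and> 1 \<le> k2 \<and> k2 \<le> m 2}"

text \<open>Union-find representative function for an equivalence E.\<close>
definition is_rep :: "(nat \<Rightarrow> nat \<Rightarrow> bool) \<Rightarrow> (nat \<Rightarrow> nat) \<Rightarrow> bool" where
  "is_rep E r \<longleftrightarrow> (\<forall>l. E l (r l)) \<and> (\<forall>l l'. E l l' \<longrightarrow> r l = r l')"

definition step4_at :: "cell \<Rightarrow> cell \<Rightarrow> (cell \<Rightarrow> nat) \<Rightarrow> (cell \<Rightarrow> nat) \<Rightarrow> bool" where
  "step4_at n t0 cur cur' \<longleftrightarrow>
     (let U = {l. 0 < l \<and> card {s \<in> Gam n t0. cur s = l} = 1};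
          bnd = (\<lambda>l. cur ` Gam n (THE s. s \<in> Gam n t0 \<and> cur s = l));
          P = (\<lambda>l l'. l \<in> U \<and> l' \<in> U \<and> l \<noteq> l' \<and> bnd l = bnd l')
      in \<exists>r. is_rep (equivclp P) r \<and>
           (let cur1 = (\<lambda>s. if s \<in> Tgrid n \<and> cdim s = 1 then r (cur s) else cur s)
            in cur' = cur1(t0 := (if (\<exists>l l'. P l l') \<and> theta n cur1 t0 = {} then 0 else cur t0))))"

primrec step4_seq :: "cell \<Rightarrow> cell list \<Rightarrow> (cell \<Rightarrow> nat) \<Rightarrow> (cell \<Rightarrow> nat) \<Rightarrow> bool" where
  "step4_seq n [] cur cur' \<longleftrightarrow> cur' = cur"
| "step4_seq n (t # ts) cur cur' \<longleftrightarrow> (\<exists>c. step4_at n t cur c \<and> step4_seq n ts c cur')"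

text \<open>tau' is a possible output of the block-wise method for the block decomposition
  given by (a, m); all arbitrary choices (block order, class numberings, union-find
  representatives, order of the 0-cells in step 4) are existentially quantified.\<close>
definition blockwise :: "cell \<Rightarrow> (cell \<Rightarrow> nat) \<Rightarrow> (nat \<Rightarrow> nat \<Rightarrow> nat) \<Rightarrow> (nat \<Rightarrow> nat) \<Rightarrow> (cell \<Rightarrow> nat) \<Rightarrow> bool" where
  "blockwise n \<sigma> a m tau' \<longleftrightarrow>
    (\<exists>bs lams rep zs.
       distinct bs \<and> set bs = blocks a m \<and>
       (\<forall>k<length bs. is_LABEL n \<sigma> (bs ! k) (lams k)) \<and>
       (let off = (\<lambda>j k. \<Sum>k'<k. mcount n (lams k') (bs ! k') j);
            sh = (\<lambda>k t. if cdim t < 3 \<and> 0 < lams k t then lams k t + off (cdim t) k else lams k t);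
            pairs = (\<lambda>j l l'. \<exists>t k k'. k < length bs \<and> k' < length bs \<and> k \<noteq> k' \<and>
                        t \<in> bs ! k \<and> t \<in> bs ! k' \<and> cdim t = j \<and>
                        0 < sh k t \<and> 0 < sh k' t \<and> l = sh k t \<and> l' = sh k' t);
            fb = (\<lambda>t. LEAST k. k < length bs \<and> t \<in> bs ! k);
            cur3 = (\<lambda>t. if (cdim t = 1 \<or> cdim t = 2) \<and> 0 < sh (fb t) t
                        then rep (cdim t) (sh (fb t) t) else sh (fb t) t)
        in (\<forall>j\<in>{1,2}. is_rep (equivclp (pairs j)) (rep j)) \<and>
           distinct zs \<and> set zs = {t \<in> Tgrid n. cdim t = 0} \<and>
           step4_seq n zs cur3 tau'))"

definition iso_on :: "cell set \<Rightarrow> (cell \<Rightarrow> nat) \<Rightarrow> (cell \<Rightarrow> nat) \<Rightarrow> bool" where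
  "iso_on U tau tau' \<longleftrightarrow>
     (\<forall>u\<in>U. tau u = 0 \<longleftrightarrow> tau' u = 0) \<and>
     (\<forall>u\<in>U. \<forall>v\<in>U. tau u = tau v \<longleftrightarrow> tau' u = tau' v)"

end

theory Submission
  imports Defs
begin

text \<open>On 3-cells both labelings are \<open>\<sigma> \<circ> vox\<close>: LABEL copies \<sigma> there, and the block-wise
  method only offsets, unites and merges labels of cells of dimension less than 3, so a
  3-cell keeps the label \<sigma> gives it in the first block containing it. Hence \<open>\<tau>\<close> and
  \<open>\<tau>'\<close> even coincide on the 3-cells.\<close>

lemma mono_sequence_interval_cover:
  fixes a :: "nat \<Rightarrow> 'a::linorder"
  assumes "0 < m" "\<forall>k<m. a k \<le> a (Suc k)" "a 0 \<le> x" "x \<le> a m"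
  shows "\<exists>k. 1 \<le> k \<and> k \<le> m \<and> a (k - 1) \<le> x \<and> x \<le> a k"
  using assms
proof (induction m)
  case 0
  then show ?case by simp
next
  case (Suc m)
  show ?case
  proof (cases "m > 0 \<and> x \<le> a m")
    case True
    with Suc obtain k where "1 \<le> k \<and> k \<le> m \<and> a (k - 1) \<le> x \<and> x \<le> a k" by auto
    then show ?thesis by (intro exI[of _ k]) auto
  next
    case False
    with Suc.prems show ?thesis by (intro exI[of _ "Suc m"]) auto
  qed
qed

lemma all_less_3_iff: "(\<forall>i<3. P (i::nat)) \<longleftrightarrow> P 0 \<and> P 1 \<and> P 2"
  by (auto simp: less_Suc_eq numeral_3_eq_3 numeral_2_eq_2)

lemma Tgrid_covered_by_blocks:
  assumes "\<forall>i<3. axis_part n a m i" and "t \<in> Tgrid n"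
  shows "\<exists>B\<in>blocks a m. t \<in> B"
proof -
  have axis_cover: "\<exists>k. 1 \<le> k \<and> k \<le> m i \<and> a i (k - 1) \<le> coord t i \<and> coord t i \<le> a i k"
    if "i < 3" for i
  proof -
    have "1 \<le> coord t i \<and> coord t i \<le> 2 * coord n i - 1"
      using assms(2) that by (auto simp: Tgrid_def)
    moreover have "axis_part n a m i"
      using assms(1) that by auto
    ultimately show ?thesis
      using mono_sequence_interval_cover[of "m i" "a i" "coord t i"]
      by (auto simp: axis_part_def less_imp_le)
  qed
  obtain k0 k1 k2 where
    "1 \<le> k0 \<and> k0 \<le> m 0 \<and> a 0 (k0 - 1) \<le> coord t 0 \<and> coord t 0 \<le> a 0 k0"
    "1 \<le> k1 \<and> k1 \<le> m 1 \<and> a 1 (k1 - 1) \<le> coord t 1 \<and> coord t 1 \<le> a 1 k1"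
    "1 \<le> k2 \<and> k2 \<le> m 2 \<and> a 2 (k2 - 1) \<le> coord t 2 \<and> coord t 2 \<le> a 2 k2"
    using axis_cover[of 0] axis_cover[of 1] axis_cover[of 2] by auto
  then show ?thesis
    unfolding blocks_def
    by (intro bexI[of _ "cbox (a 0 (k0 - 1), a 1 (k1 - 1), a 2 (k2 - 1)) (a 0 k0, a 1 k1, a 2 k2)"])
       (auto simp: cbox_def all_less_3_iff coord_def)
qed

lemma step4_at_keeps_label:
  assumes "step4_at n t0 cur cur'" "cdim s \<noteq> 1" "s \<noteq> t0"
  shows "cur' s = cur s"
  using assms unfolding step4_at_def Let_def by auto

lemma step4_seq_keeps_label:
  assumes "step4_seq n zs cur cur'" "cdim s \<noteq> 1" "s \<notin> set zs"
  shows "cur' s = cur s"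
  using assms
proof (induction zs arbitrary: cur)
  case Nil
  then show ?case by simp
next
  case (Cons z zs)
  then obtain c where "step4_at n z cur c" "step4_seq n zs c cur'" by auto
  with Cons show ?case using step4_at_keeps_label[of n z cur c s] by auto
qed

lemma is_LABEL_3cell: "is_LABEL n \<sigma> B lam \<Longrightarrow> t \<in> B \<Longrightarrow> cdim t = 3 \<Longrightarrow> lam t = \<sigma> (vox t)"
  unfolding is_LABEL_def by auto

lemma blockwise_unfold_3cells:
  assumes "blockwise n \<sigma> a m tau'"
  obtains bs lams zs cur where
    "set bs = blocks a m" "\<forall>k<length bs. is_LABEL n \<sigma> (bs ! k) (lams k)"
    "set zs = {t \<in> Tgrid n. cdim t = 0}" "step4_seq n zs cur tau'"
    "\<And>t. cdim t = 3 \<Longrightarrow> cur t = lams (LEAST k. k < length bs \<and> t \<in> bs ! k) t"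
proof -
  from assms obtain bs lams rep zs where
    "set bs = blocks a m" "\<forall>k<length bs. is_LABEL n \<sigma> (bs ! k) (lams k)"
    "set zs = {t \<in> Tgrid n. cdim t = 0}"
    "step4_seq n zs (\<lambda>t.
        let k = LEAST k. k < length bs \<and> t \<in> bs ! k;
            l = (if cdim t < 3 \<and> 0 < lams k t
                 then lams k t + (\<Sum>k'<k. mcount n (lams k') (bs ! k') (cdim t)) else lams k t)
        in if (cdim t = 1 \<or> cdim t = 2) \<and> 0 < l then rep (cdim t) l else l) tau'"
    unfolding blockwise_def Let_def by blast
  then show ?thesis
    by (rule that) (simp_all add: Let_def)
qed

lemma blockwise_3cell:
  assumes "\<forall>i<3. axis_part n a m i" and "blockwise n \<sigma> a m tau'"
    and "t \<in> Tgrid n" "cdim t = 3"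
  shows "tau' t = \<sigma> (vox t)"
proof -
  obtain bs lams zs cur where bs: "set bs = blocks a m"
    and labels: "\<forall>k<length bs. is_LABEL n \<sigma> (bs ! k) (lams k)"
    and zs: "set zs = {t \<in> Tgrid n. cdim t = 0}" and step4: "step4_seq n zs cur tau'"
    and cur: "\<And>t. cdim t = 3 \<Longrightarrow> cur t = lams (LEAST k. k < length bs \<and> t \<in> bs ! k) t"
    using blockwise_unfold_3cells[OF assms(2)] by blast
  define k where "k = (LEAST k. k < length bs \<and> t \<in> bs ! k)"
  have "\<exists>k. k < length bs \<and> t \<in> bs ! k"
    using Tgrid_covered_by_blocks[OF assms(1,3)] bs by (metis in_set_conv_nth)
  then have k: "k < length bs \<and> t \<in> bs ! k"
    unfolding k_def by (rule LeastI_ex)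
  have "tau' t = cur t"
    using step4_seq_keeps_label[OF step4] zs assms(4) by auto
  also have "\<dots> = lams k t"
    using cur assms(4) k_def by simp
  also have "\<dots> = \<sigma> (vox t)"
    using is_LABEL_3cell labels k assms(4) by blast
  finally show ?thesis .
qed

theorem proposition1:
  fixes n :: cell and \<sigma> tau tau' :: "cell \<Rightarrow> nat"
    and a :: "nat \<Rightarrow> nat \<Rightarrow> nat" and m :: "nat \<Rightarrow> nat"
  assumes "\<forall>i<3. 1 \<le> coord n i"
    and "segment_map n \<sigma>"
    and "\<forall>i<3. axis_part n a m i"
    and "is_LABEL n \<sigma> (Tgrid n) tau"
    and "blockwise n \<sigma> a m tau'"
  shows "iso_on {t \<in> Tgrid n. cdim t = 3} tau tau'"
proof -
  have "tau' t = tau t" if "t \<in> Tgrid n" "cdim t = 3" for t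
    using blockwise_3cell[OF assms(3,5) that] is_LABEL_3cell[OF assms(4) that] by simp
  then show ?thesis
    unfolding iso_on_def by auto
qed

end
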